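(* Let $P$ be an EVM program, $(\mathcal{X}_{pc})_{pc}$ the least solution of its addresses equation system, and $G=\langle V,E\rangle$ its stack-sensitive control flow graph. Then for every execution trace $t\equiv S_0\Rightarrow\dots\Rightarrow S_m$ of $P$ from $S_0=\langle 0,\langle 0,\sigma_\emptyset\rangle\rangle$, if $B^{(0)},B^{(1)},\dots,B^{(k)}$ is the sequence of blocks executed by $t$, there is a directed walk $v_0\to v_1\to\dots\to v_k$ in $G$ with $v_0=(B^{(0)},\langle 0,\sigma_\emptyset\rangle)$ such that each $v_\ell$ is a replica of $B^{(\ell)}$, i.e. $v_\ell=(B^{(\ell)},s_\ell)$ for some stack state $s_\ell$.
   Context: EVM programs. An EVM program $P\equiv b_0,\dots,b_p$ is a finite sequence of instructions, each located at a program counter (byte offset); $b_{pc}$ is the instruction at $pc$, $size(b)$ its number of bytes, so the next instruction is at $pc+size(b_{pc})$. Let $Jump=\{\texttt{JUMP},\texttt{JUMPI}\}$, $End=\{\texttt{REVERT},\texttt{STOP},\texttt{INVALID}\}$, $\mathcal{J}(P)=\{pc\mid b_{pc}\equiv\texttt{JUMPDEST}\}$. Other instructions $b^{\delta,\alpha}$ remove $\delta$ and then add $\alpha$ stack items. Blocks. $blocks(P)$ is the set of maximal segments $B_i\equiv b_i,\dots,b_j$ of consecutive instructions such that no instruction strictly between $b_i$ and $b_j$ is in $Jump\cup End\cup\{\texttt{JUMPDEST}\}$; $b_i$ is the first instruction of $P$, or $b_i\equiv\texttt{JUMPDEST}$, or the instruction preceding $b_i$ is $\texttt{JUMPI}$;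 and $b_j$ is the last instruction of $P$, or $b_j\in Jump\cup End$, or the instruction following $b_j$ is $\texttt{JUMPDEST}$. A block is identified by the program counter $i$ of its first instruction. The sequence of blocks executed by a trace $t$ is obtained by listing, in order, the block $B_{pc}$ for each state $\langle pc,\_\rangle$ of $t$ whose $pc$ is the first instruction of a block. Stack states: pairs $\langle n,\sigma\rangle$, $n\ge0$ the stack size (positions $s_0,\dots,s_{n-1}$, top $s_{n-1}$), $\sigma$ a partial map from positions to finite sets of jump destinations; $\sigma_\emptyset$ the empty map; $m[x\mapsto y]$ update; $m\backslash[x_1,\dots,x_k]$ removal from domain. Semantics. States $\langle pc,\langle n,\sigma\rangle\rangle$; transitions: $b_{pc}=\texttt{JUMP}$: $\Rightarrow\langle v,\langle n-1,\sigma\backslash[s_{n-1}]\rangle\rangle$ with $\sigma(s_{n-1})=\{v\}$; $b_{pc}=\texttt{JUMPI}$: $\Rightarrow\langle v,\langle n-2,\sigma\backslash[s_{n-1},s_{n-2}]\rangle\rangle$ with $\sigma(s_{n-1})=\{v\}$, or $\Rightarrow\langle pc+size(b_{pc}),\langle n-2,\sigma\backslash[s_{n-1},s_{n-2}]\rangle\rangle$; for $b_{pc}\notin Jump\cup End$: $\Rightarrow\langle pc+size(b_{pc}),\lambda(b_{pc},\langle n,\sigma\rangle)\rangle$; no transition from $End$. Update function $\lambda$: $\lambda(\texttt{JUMP},\langle n,\sigma\rangle)=\langle n-1,\sigma\backslash[s_{n-1}]\rangle$; $\lambda(\texttt{JUMPI},\langle n,\sigma\rangle)=\langle n-2,\sigma\backslash[s_{n-1},s_{n-2}]\rangle$;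 $\lambda(\texttt{PUSH}x\ v,\langle n,\sigma\rangle)=\langle n+1,\sigma[s_n\mapsto\{v\}]\rangle$ if $v\in\mathcal{J}(P)$, else $\langle n+1,\sigma\rangle$; $\lambda(\texttt{DUP}x,\langle n,\sigma\rangle)=\langle n+1,\sigma[s_n\mapsto\sigma(s_{n-x})]\rangle$ if $s_{n-x}\in dom(\sigma)$, else $\langle n+1,\sigma\rangle$; $\lambda(\texttt{SWAP}x,\langle n,\sigma\rangle)=\langle n,\sigma'\rangle$ with the contents (defined or undefined) of $s_{n-1}$ and $s_{n-x-1}$ exchanged; other $b^{\delta,\alpha}\notin End$: $\lambda(b,\langle n,\sigma\rangle)=\langle n-\delta+\alpha,\sigma\backslash[s_{n-1},\dots,s_{n-\delta}]\rangle$. Abstract states: partial maps from stack states to sets of stack states, ordered by domain inclusion and pointwise inclusion; bottom the empty map. $\tau(b,\pi)(s)=\{\lambda(b,t)\mid t\in\pi(s)\}$ on $dom(\pi)$; $idmap(t)$ maps $t$ to $\{t\}$ only. Addresses equation system: variables $\mathcal{X}_{pc}$ with constraints $\mathcal{X}_0\sqsupseteq idmap(\langle0,\sigma_\emptyset\rangle)$; if $b_{pc}=\texttt{JUMP}$: $\mathcal{X}_v\sqsupseteq idmap(\lambda(b_{pc},\langle n,\sigma\rangle))$ for all $s\in dom(\mathcal{X}_{pc})$, $\langle n,\sigma\rangle\in\mathcal{X}_{pc}(s)$, $v\in\sigma(s_{n-1})$; if $b_{pc}=\texttt{JUMPI}$: the same plus $\mathcal{X}_{pc+1}\sqsupseteq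 idmap(\lambda(b_{pc},\langle n,\sigma\rangle))$; if $b_{pc}\notin End\cup Jump$ and $b_{pc+size(b_{pc})}=\texttt{JUMPDEST}$: $\mathcal{X}_{pc+size(b_{pc})}\sqsupseteq idmap(\lambda(b_{pc},\langle n,\sigma\rangle))$ for all such $s,\langle n,\sigma\rangle$; otherwise if $b_{pc}\notin End\cup Jump$: $\mathcal{X}_{pc+size(b_{pc})}\sqsupseteq\tau(b_{pc},\mathcal{X}_{pc})$. Take the least solution. Stack-sensitive CFG $G=\langle V,E\rangle$: $V=\{(B_i,s)\mid B_i\in blocks(P),\ s\in dom(\mathcal{X}_i)\}$ (replicas of block $B_i$, one per entry stack state). For each block $B_i\equiv b_i,\dots,b_j$, each $s\in dom(\mathcal{X}_j)$ and each $\langle n',\sigma'\rangle\in\mathcal{X}_j(s)$, with $\langle n'',\sigma''\rangle=\lambda(b_j,\langle n',\sigma'\rangle)$: if $b_j\in Jump$, there is an edge $(B_i,s)\to(B_d,\langle n'',\sigma''\rangle)$ for every $d\in\sigma'(s_{n'-1})$; if $b_j\neq\texttt{JUMP}$ and $b_j\notin End$, there is an edge $(B_i,s)\to(B_d,\langle n'',\sigma''\rangle)$ with $d=j+size(b_j)$. $E$ is the set of all these edges. *)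

theory Defs
  imports Main
begin

text \<open>Instructions. PUSH x v has x immediate bytes (size x+1); OP d a is any other
  instruction removing d and adding a stack items.\<close>
datatype instr =
    JUMP | JUMPI | JUMPDEST | REVERT | STOP | INVALID
  | PUSH nat nat | DUP nat | SWAP nat | OP nat nat

fun isize :: "instr \<Rightarrow> nat" where
  "isize (PUSH x v) = x + 1"
| "isize _ = 1"

definition Jump :: "instr set" where "Jump = {JUMP, JUMPI}"
definition End :: "instr set" where "End = {REVERT, STOP, INVALID}"

type_synonym program = "instr list"

definition pc_of :: "program \<Rightarrow> nat \<Rightarrow> nat" where
  "pc_of P k = sum_list (map isize (take k P))"

definition code :: "program \<Rightarrow> nat \<Rightarrow> instr option" where
  "code P = map_of (zip (map (pc_of P) [0..<length P]) P)"

definition jumpdests :: "program \<Rightarrow> nat set" where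
  "jumpdests P = {pc. code P pc = Some JUMPDEST}"

type_synonym sstate = "nat \<times> (nat \<rightharpoonup> nat set)"

fun lam :: "program \<Rightarrow> instr \<Rightarrow> sstate \<Rightarrow> sstate" where
  "lam P JUMP (n, \<sigma>) = (n - 1, \<sigma>(n - 1 := None))"
| "lam P JUMPI (n, \<sigma>) = (n - 2, \<sigma>(n - 1 := None, n - 2 := None))"
| "lam P (PUSH x v) (n, \<sigma>) = (n + 1, if v \<in> jumpdests P then \<sigma>(n \<mapsto> {v}) else \<sigma>)"
| "lam P (DUP x) (n, \<sigma>) = (n + 1, if \<sigma> (n - x) \<noteq> None then \<sigma>(n := \<sigma> (n - x)) else \<sigma>)"
| "lam P (SWAP x) (n, \<sigma>) = (n, \<sigma>(n - 1 := \<sigma> (n - x - 1), n - x - 1 := \<sigma> (n - 1)))"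
| "lam P (OP d a) (n, \<sigma>) = (n - d + a, \<sigma> |` (- {n - d ..< n}))"
| "lam P JUMPDEST (n, \<sigma>) = (n, \<sigma>)"
| "lam P REVERT s = s"   (* never used: no transition from End *)
| "lam P STOP s = s"
| "lam P INVALID s = s"

type_synonym cstate = "nat \<times> sstate"

inductive step :: "program \<Rightarrow> cstate \<Rightarrow> cstate \<Rightarrow> bool" for P where
  jump: "\<lbrakk> code P pc = Some JUMP; \<sigma> (n - 1) = Some {v} \<rbrakk>
     \<Longrightarrow> step P (pc, (n, \<sigma>)) (v, (n - 1, \<sigma>(n - 1 := None)))"
| jumpi_taken: "\<lbrakk> code P pc = Some JUMPI; \<sigma> (n - 1) = Some {v} \<rbrakk>
     \<Longrightarrow> step P (pc, (n, \<sigma>)) (v, (n - 2, \<sigma>(n - 1 := None, n - 2 := None)))"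
| jumpi_fall: "code P pc = Some JUMPI
     \<Longrightarrow> step P (pc, (n, \<sigma>)) (pc + isize JUMPI, (n - 2, \<sigma>(n - 1 := None, n - 2 := None)))"
| other: "\<lbrakk> code P pc = Some b; b \<notin> Jump \<union> End \<rbrakk>
     \<Longrightarrow> step P (pc, st) (pc + isize b, lam P b st)"

definition init_sstate :: sstate where "init_sstate = (0, Map.empty)"

definition is_trace :: "program \<Rightarrow> cstate list \<Rightarrow> bool" where
  "is_trace P t \<longleftrightarrow> t \<noteq> [] \<and> hd t = (0, init_sstate)
     \<and> (\<forall>i. Suc i < length t \<longrightarrow> step P (t ! i) (t ! Suc i))"

definition is_pc :: "program \<Rightarrow> nat \<Rightarrow> bool" where
  "is_pc P pc \<longleftrightarrow> code P pc \<noteq> None"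

definition is_last :: "program \<Rightarrow> nat \<Rightarrow> bool" where
  "is_last P pc \<longleftrightarrow> P \<noteq> [] \<and> pc = pc_of P (length P - 1)"

definition block_start :: "program \<Rightarrow> nat \<Rightarrow> bool" where
  "block_start P i \<longleftrightarrow> is_pc P i \<and>
     (i = 0 \<or> code P i = Some JUMPDEST
      \<or> (\<exists>p. code P p = Some JUMPI \<and> p + isize JUMPI = i))"

definition ends_block :: "program \<Rightarrow> nat \<Rightarrow> bool" where
  "ends_block P j \<longleftrightarrow> (case code P j of None \<Rightarrow> False | Some b \<Rightarrow>
      is_last P j \<or> b \<in> Jump \<union> End \<or> code P (j + isize b) = Some JUMPDEST)"

definition block_end :: "program \<Rightarrow> nat \<Rightarrow> nat \<Rightarrow> bool" where
  "block_end P i j \<longleftrightarrow> block_start P i \<and> i \<le> j \<and> ends_block P j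
     \<and> (\<forall>pc. is_pc P pc \<and> i \<le> pc \<and> pc < j \<longrightarrow> \<not> ends_block P pc)"

definition exec_blocks :: "program \<Rightarrow> cstate list \<Rightarrow> nat list" where
  "exec_blocks P t = map fst (filter (\<lambda>S. block_start P (fst S)) t)"

type_synonym astate = "sstate \<rightharpoonup> sstate set"

definition ale :: "astate \<Rightarrow> astate \<Rightarrow> bool" where
  "ale A B \<longleftrightarrow> dom A \<subseteq> dom B \<and> (\<forall>s\<in>dom A. the (A s) \<subseteq> the (B s))"

definition idmap :: "sstate \<Rightarrow> astate" where
  "idmap t = [t \<mapsto> {t}]"

definition tau :: "program \<Rightarrow> instr \<Rightarrow> astate \<Rightarrow> astate" where
  "tau P b \<pi> = (\<lambda>s. map_option (image (lam P b)) (\<pi> s))"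

definition in_abs :: "astate \<Rightarrow> sstate \<Rightarrow> sstate \<Rightarrow> bool" where
  "in_abs A s t \<longleftrightarrow> (\<exists>T. A s = Some T \<and> t \<in> T)"

definition solution :: "program \<Rightarrow> (nat \<Rightarrow> astate) \<Rightarrow> bool" where
  "solution P X \<longleftrightarrow>
     ale (idmap init_sstate) (X 0) \<and>
     (\<forall>pc b. code P pc = Some b \<longrightarrow>
        (b \<in> Jump \<longrightarrow> (\<forall>s n \<sigma> D v. in_abs (X pc) s (n, \<sigma>) \<longrightarrow> \<sigma> (n - 1) = Some D \<longrightarrow> v \<in> D
              \<longrightarrow> ale (idmap (lam P b (n, \<sigma>))) (X v))) \<and>
        (b = JUMPI \<longrightarrow> (\<forall>s t. in_abs (X pc) s t
              \<longrightarrow> ale (idmap (lam P b t)) (X (pc + 1)))) \<and>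
        (b \<notin> End \<union> Jump \<and> code P (pc + isize b) = Some JUMPDEST \<longrightarrow>
            (\<forall>s t. in_abs (X pc) s t \<longrightarrow> ale (idmap (lam P b t)) (X (pc + isize b)))) \<and>
        (b \<notin> End \<union> Jump \<and> code P (pc + isize b) \<noteq> Some JUMPDEST \<longrightarrow>
            ale (tau P b (X pc)) (X (pc + isize b))))"

definition least_solution :: "program \<Rightarrow> (nat \<Rightarrow> astate) \<Rightarrow> bool" where
  "least_solution P X \<longleftrightarrow> solution P X \<and>
     (\<forall>Y. solution P Y \<longrightarrow> (\<forall>pc. ale (X pc) (Y pc)))"

text \<open>vertices: (block start pc, entry stack state)\<close>
definition cfg_V :: "program \<Rightarrow> (nat \<Rightarrow> astate) \<Rightarrow> (nat \<times> sstate) set" where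
  "cfg_V P X = {(i, s). block_start P i \<and> s \<in> dom (X i)}"

definition cfg_E :: "program \<Rightarrow> (nat \<Rightarrow> astate) \<Rightarrow> ((nat \<times> sstate) \<times> (nat \<times> sstate)) set" where
  "cfg_E P X = {((i, s), (d, s'')) | i j b s n' \<sigma>' s'' d.
      block_end P i j \<and> code P j = Some b \<and> in_abs (X j) s (n', \<sigma>') \<and>
      s'' = lam P b (n', \<sigma>') \<and>
      ((b \<in> Jump \<and> (\<exists>D. \<sigma>' (n' - 1) = Some D \<and> d \<in> D))
       \<or> (b \<noteq> JUMP \<and> b \<notin> End \<and> d = j + isize b))}"

end

theory Submission imports Defs begin

text \<open>A trace is simulated block by block. While execution stays inside a block entered in
  stack state s, the current concrete stack state belongs to the abstract value of X at the
  current pc under key s; this is exactly what the non-JUMPDEST constraints (via tau)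
  propagate. When the block ends, the executed step is the label of a CFG edge out of the
  replica, and the equation system (through idmap) seeds the entry of the next block with
  the concrete stack state itself, which becomes the key of the next replica. Jump targets
  are block starts because PUSH only records jump destinations in the abstract stack.\<close>

section \<open>Program layout\<close>

lemma isize_pos: "0 < isize b"
  by (cases b) auto

lemma code_Some_nth: "code P q = Some c \<Longrightarrow> \<exists>k<length P. q = pc_of P k \<and> c = P ! k"
  unfolding code_def by (auto dest!: map_of_SomeD simp: in_set_zip) blast

lemma pc_of_Suc: "k < length P \<Longrightarrow> pc_of P (Suc k) = pc_of P k + isize (P ! k)"
  by (simp add: pc_of_def take_Suc_conv_app_nth)

lemma pc_of_mono:
  assumes "k \<le> k'"
  shows "pc_of P k \<le> pc_of P k'"
proof -
  have "take k' P = take k P @ drop k (take k' P)"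
    using assms by (metis append_take_drop_id min.absorb1 take_take)
  then have "pc_of P k' = pc_of P k + sum_list (map isize (drop k (take k' P)))"
    unfolding pc_of_def by (metis map_append sum_list_append)
  then show ?thesis by simp
qed

lemma code_next_le:
  assumes "code P p = Some b" "code P q = Some c" "p < q"
  shows "p + isize b \<le> q"
proof -
  obtain k1 where k1: "k1 < length P" "p = pc_of P k1" "b = P ! k1"
    using code_Some_nth[OF assms(1)] by blast
  obtain k2 where k2: "q = pc_of P k2"
    using code_Some_nth[OF assms(2)] by blast
  have "Suc k1 \<le> k2"
    using pc_of_mono[of k2 k1 P] k1 k2 assms(3) by (meson not_less_eq_eq leD)
  then show ?thesis
    using pc_of_mono[of "Suc k1" k2 P] pc_of_Suc[OF k1(1)] k1 k2 by simp
qed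

lemma code_after_last:
  assumes "is_last P j" "code P j = Some b"
  shows "code P (j + isize b) = None"
proof (rule ccontr)
  assume "code P (j + isize b) \<noteq> None"
  then obtain k where k: "k < length P" "j + isize b = pc_of P k"
    using code_Some_nth by blast
  then have "pc_of P k \<le> pc_of P (length P - 1)"
    by (intro pc_of_mono) simp
  then show False
    using assms(1) k isize_pos[of b] unfolding is_last_def by simp
qed

text \<open>The only way a fall-through successor could start a block without being a JUMPDEST is
  by following a JUMPI; instructions do not overlap, so that JUMPI would have to be the
  instruction at p itself.\<close>
lemma not_block_start_inside:
  assumes "code P p = Some b" "b \<notin> Jump \<union> End" "\<not> ends_block P p"
  shows "\<not> block_start P (p + isize b)"
proof
  assume start: "block_start P (p + isize b)"
  have "code P (p + isize b) \<noteq> Some JUMPDEST"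
    using assms unfolding ends_block_def by auto
  with start obtain p' where p': "code P p' = Some JUMPI" "p' + isize JUMPI = p + isize b"
    unfolding block_start_def using isize_pos[of b] by auto
  consider "p' = p" | "p < p'" | "p' < p" by linarith
  then show False
  proof cases
    case 1
    then show ?thesis using p' assms by (auto simp: Jump_def)
  next
    case 2
    then show ?thesis using code_next_le[OF assms(1) p'(1)] p' by simp
  next
    case 3
    then show ?thesis using code_next_le[OF p'(1) assms(1)] p' isize_pos[of b] by simp
  qed
qed

section \<open>Traces\<close>

definition jump_targets_ok :: "program \<Rightarrow> (nat \<rightharpoonup> nat set) \<Rightarrow> bool" where
  "jump_targets_ok P \<sigma> \<longleftrightarrow> (\<forall>k D. \<sigma> k = Some D \<longrightarrow> D \<subseteq> jumpdests P)"

lemma jump_targets_ok_lam: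
  "jump_targets_ok P (snd st) \<Longrightarrow> jump_targets_ok P (snd (lam P b st))"
  by (cases st; cases b) (auto simp: jump_targets_ok_def restrict_map_def split: if_splits)

lemma jump_targets_ok_step:
  "step P S S' \<Longrightarrow> jump_targets_ok P (snd (snd S)) \<Longrightarrow> jump_targets_ok P (snd (snd S'))"
proof (induction rule: step.induct)
  case (other pc b st)
  then show ?case using jump_targets_ok_lam[of P st b] by simp
qed (auto simp: jump_targets_ok_def)

lemma is_trace_snoc:
  assumes "is_trace P (ts @ [S])" "ts \<noteq> []"
  shows "is_trace P ts \<and> step P (last ts) S"
proof
  have steps: "step P ((ts @ [S]) ! i) ((ts @ [S]) ! Suc i)" if "Suc i < Suc (length ts)" for i
    using assms(1) that unfolding is_trace_def by simp
  show "is_trace P ts"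
    unfolding is_trace_def
  proof (intro conjI allI impI)
    fix i
    assume "Suc i < length ts"
    then show "step P (ts ! i) (ts ! Suc i)"
      using steps[of i] by (simp add: nth_append)
  qed (use assms in \<open>auto simp: is_trace_def\<close>)
  show "step P (last ts) S"
    using steps[of "length ts - 1"] assms(2) by (simp add: nth_append last_conv_nth)
qed

lemma trace_jump_targets_ok: "is_trace P t \<Longrightarrow> jump_targets_ok P (snd (snd (last t)))"
proof (induction t rule: rev_induct)
  case (snoc S ts)
  show ?case
  proof (cases "ts = []")
    case True
    then show ?thesis
      using snoc.prems by (simp add: is_trace_def init_sstate_def jump_targets_ok_def)
  next
    case False
    then have "is_trace P ts" "step P (last ts) S"
      using is_trace_snoc snoc.prems by blast+
    then show ?thesis
      using snoc.IH jump_targets_ok_step by simp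
  qed
qed (simp add: is_trace_def)

section \<open>Transfer through the equation system\<close>

lemma in_abs_ale_idmap: "ale (idmap t) A \<Longrightarrow> in_abs A t t"
  by (auto simp: ale_def idmap_def in_abs_def)

lemma in_abs_dom: "in_abs A s t \<Longrightarrow> s \<in> dom A"
  by (auto simp: in_abs_def)

lemma in_abs_tau:
  assumes "ale (tau P b A) B" "in_abs A s t"
  shows "in_abs B s (lam P b t)"
proof -
  obtain T where T: "A s = Some T" "t \<in> T"
    using assms(2) unfolding in_abs_def by blast
  then have tau_s: "tau P b A s = Some (lam P b ` T)"
    by (simp add: tau_def)
  then obtain U where U: "B s = Some U"
    using assms(1) unfolding ale_def by blast
  have "lam P b ` T \<subseteq> U"
    using assms(1) tau_s U unfolding ale_def by (metis domI option.sel)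
  then show ?thesis using U T unfolding in_abs_def by blast
qed

lemma solution_jumpD:
  assumes "solution P X" "code P pc = Some b" "b \<in> Jump" "in_abs (X pc) s st"
    "snd st (fst st - 1) = Some D" "v \<in> D"
  shows "ale (idmap (lam P b st)) (X v)"
proof -
  obtain n \<sigma> where st: "st = (n, \<sigma>)" by fastforce
  have "\<forall>s n \<sigma> D v. in_abs (X pc) s (n, \<sigma>) \<longrightarrow> \<sigma> (n - 1) = Some D \<longrightarrow> v \<in> D
      \<longrightarrow> ale (idmap (lam P b (n, \<sigma>))) (X v)"
    using assms(1-3) unfolding solution_def by blast
  then show ?thesis using assms(4-6) unfolding st fst_conv snd_conv by blast
qed

lemma solution_JUMPID:
  assumes "solution P X" "code P pc = Some JUMPI" "in_abs (X pc) s st"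
  shows "ale (idmap (lam P JUMPI st)) (X (pc + 1))"
  using assms unfolding solution_def by blast

lemma solution_JUMPDESTD:
  assumes "solution P X" "code P pc = Some b" "b \<notin> End \<union> Jump"
    "code P (pc + isize b) = Some JUMPDEST" "in_abs (X pc) s st"
  shows "ale (idmap (lam P b st)) (X (pc + isize b))"
  using assms unfolding solution_def by blast

lemma solution_tauD:
  assumes "solution P X" "code P pc = Some b" "b \<notin> End \<union> Jump"
    "code P (pc + isize b) \<noteq> Some JUMPDEST"
  shows "ale (tau P b (X pc)) (X (pc + isize b))"
  using assms unfolding solution_def by blast

lemma step_edge_label:
  assumes "step P (pc, st) (pc', st')" "code P pc = Some b"
  shows "st' = lam P b st \<and> b \<notin> End
    \<and> ((b \<in> Jump \<and> (\<exists>D. snd st (fst st - 1) = Some D \<and> pc' \<in> D))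
       \<or> (b \<noteq> JUMP \<and> pc' = pc + isize b))"
  using assms by (cases rule: step.cases) (auto simp: Jump_def End_def)

lemma step_in_cfg_E:
  assumes "block_end P i j" "code P j = Some b" "in_abs (X j) s st" "step P (j, st) (d, st')"
  shows "((i, s), (d, st')) \<in> cfg_E P X"
proof -
  obtain n \<sigma> where st: "st = (n, \<sigma>)" by fastforce
  then have "st' = lam P b (n, \<sigma>)" "b \<notin> End"
    "(b \<in> Jump \<and> (\<exists>D. \<sigma> (n - 1) = Some D \<and> d \<in> D)) \<or> (b \<noteq> JUMP \<and> d = j + isize b)"
    using step_edge_label[OF assms(4,2)] by auto
  then show ?thesis
    using assms(1-3) st unfolding cfg_E_def by blast
qed

definition in_replica :: "program \<Rightarrow> (nat \<Rightarrow> astate) \<Rightarrow> nat \<times> sstate \<Rightarrow> cstate \<Rightarrow> bool" where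
  "in_replica P X v S \<longleftrightarrow> fst v \<le> fst S
     \<and> (\<forall>q. is_pc P q \<and> fst v \<le> q \<and> q < fst S \<longrightarrow> \<not> ends_block P q)
     \<and> in_abs (X (fst S)) (snd v) (snd S)"

lemma in_replica_entry: "in_abs (X i) s s \<Longrightarrow> in_replica P X (i, s) (i, s)"
  by (auto simp: in_replica_def)

lemma in_replica_step_inside:
  assumes sol: "solution P X"
    and inside: "in_replica P X v (pc, st)"
    and step: "step P (pc, st) (pc', st')"
    and not_end: "\<not> ends_block P pc"
  shows "in_replica P X v (pc', st') \<and> \<not> block_start P pc'"
proof -
  obtain b where b: "code P pc = Some b"
    using step by (cases rule: step.cases) auto
  have b_plain: "b \<notin> Jump \<union> End" and no_jumpdest: "code P (pc + isize b) \<noteq> Some JUMPDEST"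
    using not_end b unfolding ends_block_def by auto
  then have pc': "pc' = pc + isize b" and st': "st' = lam P b st"
    using step_edge_label[OF step b] by auto
  have "ale (tau P b (X pc)) (X pc')"
    using solution_tauD[OF sol b] b_plain no_jumpdest pc' by blast
  then have "in_abs (X pc') (snd v) st'"
    using in_abs_tau inside st' unfolding in_replica_def by auto
  moreover have "\<not> ends_block P q" if q: "is_pc P q" "fst v \<le> q" "q < pc'" for q
  proof -
    obtain c where c: "code P q = Some c"
      using q(1) by (auto simp: is_pc_def)
    have "\<not> pc < q"
    proof
      assume "pc < q"
      then have "pc + isize b \<le> q" using code_next_le[OF b c] by blast
      then show False using q(3) pc' by simp
    qed
    then show ?thesis
      using inside not_end q unfolding in_replica_def by (cases "q = pc") auto
  qed
  ultimately show ?thesis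
    using inside pc' not_block_start_inside[OF b b_plain not_end] unfolding in_replica_def by auto
qed

lemma step_exit_target:
  assumes sol: "solution P X"
    and targets: "jump_targets_ok P (snd st)"
    and at_end: "ends_block P pc"
    and abs: "in_abs (X pc) s st"
    and step: "step P (pc, st) (pc', st')"
  shows "(block_start P pc' \<and> in_abs (X pc') st' st') \<or> \<not> is_pc P pc'"
proof -
  obtain b where b: "code P pc = Some b"
    using step by (cases rule: step.cases) auto
  have st': "st' = lam P b st" and not_end: "b \<notin> End"
    using step_edge_label[OF step b] by auto
  consider D where "b \<in> Jump" "snd st (fst st - 1) = Some D" "pc' \<in> D"
    | "b = JUMPI" "pc' = pc + 1"
    | "b \<notin> Jump" "pc' = pc + isize b"
    using step_edge_label[OF step b] by (cases "b = JUMPI") (auto simp: Jump_def)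
  then show ?thesis
  proof cases
    case 1
    then have "code P pc' = Some JUMPDEST"
      using targets by (auto simp: jump_targets_ok_def jumpdests_def)
    moreover have "ale (idmap st') (X pc')"
      using solution_jumpD[OF sol b 1(1) abs 1(2,3)] st' by simp
    ultimately show ?thesis
      by (simp add: block_start_def is_pc_def in_abs_ale_idmap)
  next
    case 2
    then have "is_pc P pc' \<longrightarrow> block_start P pc'"
      using b by (auto simp: block_start_def)
    moreover have "ale (idmap st') (X pc')"
      using solution_JUMPID[OF sol b[unfolded 2(1)] abs] st' 2 by simp
    ultimately show ?thesis
      using in_abs_ale_idmap by blast
  next
    case 3
    then have "is_last P pc \<or> code P pc' = Some JUMPDEST"
      using at_end b not_end unfolding ends_block_def by auto
    then show ?thesis
    proof
      assume "is_last P pc"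
      then show ?thesis
        using code_after_last b 3 by (simp add: is_pc_def)
    next
      assume jumpdest: "code P pc' = Some JUMPDEST"
      then have "ale (idmap st') (X pc')"
        using solution_JUMPDESTD[OF sol b] 3 not_end abs st' by simp
      then show ?thesis
        using jumpdest by (simp add: block_start_def is_pc_def in_abs_ale_idmap)
    qed
  qed
qed

section \<open>Simulation of a trace by a walk\<close>

definition is_walk :: "('v \<times> 'v) set \<Rightarrow> 'v list \<Rightarrow> bool" where
  "is_walk E vs \<longleftrightarrow> (\<forall>l. Suc l < length vs \<longrightarrow> (vs ! l, vs ! Suc l) \<in> E)"

lemma is_walk_snoc:
  assumes "is_walk E vs" "vs \<noteq> []" "(last vs, v) \<in> E"
  shows "is_walk E (vs @ [v])"
  unfolding is_walk_def
proof (intro allI impI)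
  fix l
  assume "Suc l < length (vs @ [v])"
  then consider "Suc l < length vs" | "Suc l = length vs" by fastforce
  then show "((vs @ [v]) ! l, (vs @ [v]) ! Suc l) \<in> E"
  proof cases
    case 1
    then show ?thesis using assms(1) by (simp add: is_walk_def nth_append)
  next
    case 2
    then have "l = length vs - 1" by simp
    then show ?thesis using 2 assms(2,3) by (simp add: nth_append last_conv_nth)
  qed
qed

lemma exec_blocks_snoc:
  "exec_blocks P (ts @ [S]) = exec_blocks P ts @ (if block_start P (fst S) then [fst S] else [])"
  by (simp add: exec_blocks_def)

definition simulates :: "program \<Rightarrow> (nat \<Rightarrow> astate) \<Rightarrow> cstate list \<Rightarrow> (nat \<times> sstate) list \<Rightarrow> bool" where
  "simulates P X t vs \<longleftrightarrow> map fst vs = exec_blocks P t \<and> set vs \<subseteq> cfg_V P X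
     \<and> (vs \<noteq> [] \<longrightarrow> snd (hd vs) = init_sstate) \<and> is_walk (cfg_E P X) vs
     \<and> (is_pc P (fst (last t)) \<longrightarrow> vs \<noteq> [] \<and> in_replica P X (last vs) (last t))"

lemma simulates_start:
  assumes "solution P X"
  shows "\<exists>vs. simulates P X [(0, init_sstate)] vs"
proof (cases "is_pc P 0")
  case True
  then have blocks: "exec_blocks P [(0, init_sstate)] = [0]"
    by (simp add: exec_blocks_def block_start_def)
  have "in_abs (X 0) init_sstate init_sstate"
    using assms in_abs_ale_idmap by (simp add: solution_def)
  then have "(0, init_sstate) \<in> cfg_V P X" "in_replica P X (0, init_sstate) (0, init_sstate)"
    using True by (auto simp: cfg_V_def block_start_def in_abs_dom in_replica_entry)
  then have "simulates P X [(0, init_sstate)] [(0, init_sstate)]"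
    using blocks by (simp add: simulates_def is_walk_def)
  then show ?thesis ..
next
  case False
  then have "simulates P X [(0, init_sstate)] []"
    by (simp add: simulates_def exec_blocks_def is_walk_def block_start_def)
  then show ?thesis ..
qed

lemma simulates_snoc:
  assumes sol: "solution P X"
    and sim: "simulates P X ts vs"
    and targets: "jump_targets_ok P (snd (snd (last ts)))"
    and step: "step P (last ts) (pc', st')"
  shows "\<exists>vs'. simulates P X (ts @ [(pc', st')]) vs'"
proof -
  obtain pc st where last_ts: "last ts = (pc, st)"
    by (cases "last ts")
  have "is_pc P pc"
    using step last_ts by (cases rule: step.cases) (auto simp: is_pc_def)
  then obtain i s where last_vs: "last vs = (i, s)" and vs_ne: "vs \<noteq> []"
    and inside: "in_replica P X (i, s) (pc, st)"
    using sim last_ts unfolding simulates_def by (metis fst_conv prod.collapse)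
  have "(i, s) \<in> cfg_V P X"
    using sim vs_ne last_vs unfolding simulates_def by (metis last_in_set subsetD)
  then have start: "block_start P i"
    by (simp add: cfg_V_def)
  show ?thesis
  proof (cases "ends_block P pc")
    case True
    obtain b where b: "code P pc = Some b"
      using step last_ts by (cases rule: step.cases) auto
    have "block_end P i pc"
      using start True inside unfolding block_end_def in_replica_def by auto
    moreover have abs: "in_abs (X pc) s st"
      using inside by (simp add: in_replica_def)
    ultimately have edge: "((i, s), (pc', st')) \<in> cfg_E P X"
      using step_in_cfg_E[OF _ b] step last_ts by simp
    from abs have "(block_start P pc' \<and> in_abs (X pc') st' st') \<or> \<not> is_pc P pc'"
      using step_exit_target[OF sol _ True _ step[unfolded last_ts]] targets last_ts by simp
    then consider "block_start P pc'" "in_abs (X pc') st' st'"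
      | "\<not> block_start P pc'" "\<not> is_pc P pc'"
      by (auto simp: block_start_def)
    then show ?thesis
    proof cases
      case 1
      then have "simulates P X (ts @ [(pc', st')]) (vs @ [(pc', st')])"
        using sim vs_ne last_vs edge
        by (auto simp: simulates_def exec_blocks_snoc cfg_V_def in_abs_dom in_replica_entry
            intro!: is_walk_snoc)
      then show ?thesis ..
    next
      case 2
      then have "simulates P X (ts @ [(pc', st')]) vs"
        using sim by (simp add: simulates_def exec_blocks_snoc)
      then show ?thesis ..
    qed
  next
    case False
    then have "in_replica P X (i, s) (pc', st') \<and> \<not> block_start P pc'"
      using in_replica_step_inside[OF sol inside] step last_ts by simp
    then have "simulates P X (ts @ [(pc', st')]) vs"
      using sim vs_ne last_vs by (simp add: simulates_def exec_blocks_snoc)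
    then show ?thesis ..
  qed
qed

lemma trace_simulated:
  assumes sol: "solution P X"
  shows "is_trace P t \<Longrightarrow> \<exists>vs. simulates P X t vs"
proof (induction t rule: rev_induct)
  case (snoc S ts)
  show ?case
  proof (cases "ts = []")
    case True
    then show ?thesis
      using snoc.prems simulates_start[OF sol] by (simp add: is_trace_def)
  next
    case False
    then have trace: "is_trace P ts" and step: "step P (last ts) S"
      using is_trace_snoc snoc.prems by blast+
    obtain vs where "simulates P X ts vs"
      using snoc.IH trace by blast
    then show ?thesis
      using simulates_snoc[OF sol _ trace_jump_targets_ok[OF trace]] step
      by (cases S) blast
  qed
qed (simp add: is_trace_def)

theorem theorem2:
  fixes P :: program and X :: "nat \<Rightarrow> astate" and t :: "cstate list"
  assumes "least_solution P X"
    and "is_trace P t"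
  shows "\<exists>vs :: (nat \<times> sstate) list.
           length vs = length (exec_blocks P t)
         \<and> (exec_blocks P t \<noteq> [] \<longrightarrow> vs ! 0 = (exec_blocks P t ! 0, init_sstate))
         \<and> (\<forall>l < length vs. fst (vs ! l) = exec_blocks P t ! l \<and> vs ! l \<in> cfg_V P X)
         \<and> (\<forall>l. Suc l < length vs \<longrightarrow> (vs ! l, vs ! Suc l) \<in> cfg_E P X)"
proof -
  have "solution P X"
    using assms(1) by (simp add: least_solution_def)
  then obtain vs where sim: "simulates P X t vs"
    using trace_simulated assms(2) by blast
  then have blocks: "map fst vs = exec_blocks P t" and vertices: "set vs \<subseteq> cfg_V P X"
    and entry: "vs \<noteq> [] \<longrightarrow> snd (hd vs) = init_sstate" and walk: "is_walk (cfg_E P X) vs"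
    by (simp_all add: simulates_def)
  show ?thesis
  proof (intro exI conjI impI allI)
    show "length vs = length (exec_blocks P t)"
      using blocks by (metis length_map)
  next
    assume "exec_blocks P t \<noteq> []"
    then have "vs \<noteq> []" using blocks by auto
    then have "fst (vs ! 0) = exec_blocks P t ! 0" "snd (vs ! 0) = init_sstate"
      using blocks entry nth_map[of 0 vs fst] by (auto simp: hd_conv_nth)
    then show "vs ! 0 = (exec_blocks P t ! 0, init_sstate)"
      by (simp add: prod_eq_iff)
  next
    fix l
    assume "l < length vs"
    then show "fst (vs ! l) = exec_blocks P t ! l" "vs ! l \<in> cfg_V P X"
      using blocks vertices nth_map[of l vs fst] by auto
  next
    fix l
    assume "Suc l < length vs"
    then show "(vs ! l, vs ! Suc l) \<in> cfg_E P X"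
      using walk by (simp add: is_walk_def)
  qed
qed

end
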